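(* Let ${\cal X}$ be a real Hilbert space, $M\in\mathbb{N}_0$ and $\kappa_1,\kappa_2>0$. For all $j\in\{1,\dots,M\}$ let $(s_j,y_j)\in{\cal X}\times{\cal X}$ satisfy $$\frac{y_j^Ts_j}{\|s_j\|^2}\ge\frac1{\kappa_1}\qquad\text{and}\qquad\frac{y_j^Ts_j}{\|y_j\|^2}\ge\frac1{\kappa_2}.$$ Let $B^{(0)}\in\mathcal{L}_+({\cal X})$, set $B_0:=B^{(0)}$ and $$B_j:=B_{j-1}+\frac{y_jy_j^T}{y_j^Ts_j}-\frac{B_{j-1}s_js_j^TB_{j-1}}{s_j^TB_{j-1}s_j},\qquad j=1,\dots,M,$$ and $B:=B_M$. Then $B\in\mathcal{L}_+({\cal X})$, $$\|B\|\le\|B^{(0)}\|+M\kappa_2,$$ and $$\|B^{-1}\|\le5^M\max\{1,\|(B^{(0)})^{-1}\|\}\max\{1,\kappa_1^M,(\kappa_1\kappa_2)^M\}.$$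
   Context: ${\cal X}$ is a real Hilbert space with inner product written $x^Ty$ and induced norm $\|\cdot\|$; for $u,v\in{\cal X}$, $uv^T$ denotes the operator $w\mapsto u\,(v^Tw)$. $\mathcal{L}({\cal X})$ is the space of bounded linear operators on ${\cal X}$ and $\mathcal{L}_+({\cal X})$ the set of self-adjoint positive definite operators in $\mathcal{L}({\cal X})$. Operator norms are the induced norms. *)

theory Defs
  imports "HOL-Analysis.Analysis"
begin

definition rank1 :: "'a::real_inner \<Rightarrow> 'a \<Rightarrow> ('a \<Rightarrow>\<^sub>L 'a)" where
  "rank1 u v = Blinfun (\<lambda>w. (v \<bullet> w) *\<^sub>R u)"

text \<open>Self-adjoint positive definite bounded operators (positive definite in the
  Hilbert-space sense: uniformly positive, x^T A x \<ge> c ||x||^2 with c > 0).\<close>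
definition Lplus :: "('a::{real_inner,complete_space} \<Rightarrow>\<^sub>L 'a) set" where
  "Lplus = {A. (\<forall>x y. (blinfun_apply A x) \<bullet> y = x \<bullet> (blinfun_apply A y)) \<and>
               (\<exists>c>0. \<forall>x. x \<bullet> (blinfun_apply A x) \<ge> c * (norm x)\<^sup>2)}"

definition blinfun_inv :: "('a::real_normed_vector \<Rightarrow>\<^sub>L 'a) \<Rightarrow> ('a \<Rightarrow>\<^sub>L 'a)" where
  "blinfun_inv A = (SOME C. A o\<^sub>L C = id_blinfun \<and> C o\<^sub>L A = id_blinfun)"

fun bfgs_seq :: "('a::real_inner \<Rightarrow>\<^sub>L 'a) \<Rightarrow> (nat \<Rightarrow> 'a) \<Rightarrow> (nat \<Rightarrow> 'a) \<Rightarrow> nat \<Rightarrow> ('a \<Rightarrow>\<^sub>L 'a)" where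
  "bfgs_seq B0 s y 0 = B0"
| "bfgs_seq B0 s y (Suc j) =
     (let Bp = bfgs_seq B0 s y j; sj = s (Suc j); yj = y (Suc j) in
        Bp + (1 / (yj \<bullet> sj)) *\<^sub>R rank1 yj yj
           - (1 / (sj \<bullet> blinfun_apply Bp sj)) *\<^sub>R (rank1 (blinfun_apply Bp sj) sj o\<^sub>L Bp))"

end

theory Submission
  imports Defs
begin

text \<open>Everything is read off the quadratic forms q_j(x) = x^T B_j x. An update adds
  (y^T x)^2/(y^T s) \<le> \<kappa>2 ||x||^2 and subtracts a term that, by the Cauchy-Schwarz
  inequality for the form of B_{j-1}, never exceeds q_{j-1}(x); this keeps B_j positive
  semidefinite and gives the bound on ||B||. For coercivity split x = z + \<alpha> s with z
  B_{j-1}-orthogonal to s: then q_j(x) = q_{j-1}(z) + (y^T x)^2/(y^T s), while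
  ||x|| \<le> |y^T x|/(y^T s) ||s|| + (1 + ||y|| ||s||/(y^T s)) ||z||, and a weighted
  Cauchy-Schwarz inequality turns a coercivity constant h of B_{j-1} into the constant
  \<kappa>1 + (2 + 2 \<kappa>1 \<kappa>2) h \<le> 5 max {1, \<kappa>1, \<kappa>1 \<kappa>2} h of B_j. A coercive operator on a
  Hilbert space is invertible, with the coercivity constant bounding the norm of the
  inverse (b is reached as the fixed point of the contraction x \<mapsto> x - t (B x - b)), and
  ||(B^{(0)})^{-1}|| is a coercivity constant of B^{(0)}.\<close>

definition selfadjoint :: "('a::real_inner \<Rightarrow>\<^sub>L 'a) \<Rightarrow> bool" where
  "selfadjoint A \<longleftrightarrow> (\<forall>x w. A x \<bullet> w = x \<bullet> A w)"

lemma selfadjoint_nonneg_Cauchy_Schwarz: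
  assumes "selfadjoint A" and nonneg: "\<And>x. 0 \<le> x \<bullet> A x"
  shows "(w \<bullet> A x)\<^sup>2 \<le> (w \<bullet> A w) * (x \<bullet> A x)"
proof -
  define a b c where "a = x \<bullet> A x" and "b = w \<bullet> A x" and "c = w \<bullet> A w"
  have quadratic: "0 \<le> a + 2 * t * b + t\<^sup>2 * c" for t
  proof -
    have "0 \<le> (x + t *\<^sub>R w) \<bullet> A (x + t *\<^sub>R w)" by (rule nonneg)
    also have "\<dots> = a + 2 * t * b + t\<^sup>2 * c"
      using assms(1) unfolding a_def b_def c_def selfadjoint_def
      by (simp add: blinfun.bilinear_simps inner_add_left inner_add_right power2_eq_square
          algebra_simps inner_commute)
    finally show ?thesis .
  qed
  show ?thesis
  proof (cases "c = 0")
    case True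
    have "b = 0"
    proof (rule ccontr)
      assume "b \<noteq> 0"
      then have "0 \<le> a + 2 * (- (a + 1) / (2 * b)) * b"
        using quadratic[of "- (a + 1) / (2 * b)"] True by simp
      with \<open>b \<noteq> 0\<close> show False by (simp add: field_simps)
    qed
    then show ?thesis using True by (simp add: b_def c_def)
  next
    case False
    then have "c > 0" using nonneg[of w] by (simp add: c_def)
    have "0 \<le> a + 2 * (- b / c) * b + (- b / c)\<^sup>2 * c" by (rule quadratic)
    also have "\<dots> = a - b\<^sup>2 / c" using False by (simp add: field_simps power2_eq_square)
    finally have "b\<^sup>2 \<le> a * c" using \<open>c > 0\<close> by (simp add: field_simps)
    then show ?thesis by (simp add: a_def b_def c_def mult.commute)
  qed
qed

lemma inner_blinfun_le_norm:
  fixes A :: "'a::real_inner \<Rightarrow>\<^sub>L 'a"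
  shows "x \<bullet> A x \<le> norm A * (norm x)\<^sup>2"
proof -
  have "x \<bullet> A x \<le> norm x * (norm A * norm x)"
    by (rule order_trans[OF norm_cauchy_schwarz]) (simp add: mult_left_mono norm_blinfun)
  then show ?thesis by (simp add: power2_eq_square mult_ac)
qed

lemma norm_blinfun_le_quadratic_bound:
  assumes "selfadjoint A" and nonneg: "\<And>x. 0 \<le> x \<bullet> A x"
    and bound: "\<And>x. x \<bullet> A x \<le> K * (norm x)\<^sup>2" and "0 \<le> K"
  shows "norm A \<le> K"
proof (rule norm_blinfun_bound[OF \<open>0 \<le> K\<close>])
  fix x
  have "((norm (A x))\<^sup>2)\<^sup>2 = (A x \<bullet> A x)\<^sup>2" by (simp add: power2_norm_eq_inner)
  also have "\<dots> \<le> (A x \<bullet> A (A x)) * (x \<bullet> A x)"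
    by (rule selfadjoint_nonneg_Cauchy_Schwarz[OF assms(1) nonneg])
  also have "\<dots> \<le> (K * (norm (A x))\<^sup>2) * (K * (norm x)\<^sup>2)"
    by (intro mult_mono bound nonneg) (auto intro: order_trans[OF nonneg bound])
  also have "\<dots> = (K * norm x * norm (A x))\<^sup>2" by (simp add: power2_eq_square algebra_simps)
  finally have "(norm (A x))\<^sup>2 \<le> K * norm x * norm (A x)"
    by (rule power2_le_imp_le) (use \<open>0 \<le> K\<close> in simp)
  then show "norm (A x) \<le> K * norm x"
    using \<open>0 \<le> K\<close> by (cases "A x = 0") (auto simp: power2_eq_square)
qed

lemma coercive_nonneg:
  assumes "\<And>x. (norm x)\<^sup>2 \<le> H * (x \<bullet> A x)" and "H > 0"
  shows "0 \<le> x \<bullet> A x"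
  using order_trans[OF zero_le_power2 assms(1)] assms(2) by (simp add: zero_le_mult_iff)

lemma coercive_norm_le:
  fixes A :: "'a::real_inner \<Rightarrow>\<^sub>L 'a"
  assumes "\<And>x. (norm x)\<^sup>2 \<le> H * (x \<bullet> A x)" and "0 \<le> H"
  shows "norm x \<le> H * norm (A x)"
proof (cases "x = 0")
  case False
  have "(norm x)\<^sup>2 \<le> H * (norm x * norm (A x))"
    using assms by (intro order_trans[OF assms(1)] mult_left_mono norm_cauchy_schwarz)
  then have "norm x * norm x \<le> norm x * (H * norm (A x))"
    by (simp add: power2_eq_square algebra_simps)
  then show ?thesis using False by simp
qed simp

lemma coercive_contraction:
  fixes A :: "'a::real_inner \<Rightarrow>\<^sub>L 'a"
  assumes coercive: "\<And>x. (norm x)\<^sup>2 \<le> H * (x \<bullet> A x)" and "H > 0"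
  obtains t c where "t > 0" "0 \<le> c" "c < 1" "\<And>d. norm (d - t *\<^sub>R A d) \<le> c * norm d"
proof -
  define N where "N = norm A"
  define t where "t = 1 / (H * (N\<^sup>2 + 1))"
  define q where "q = 1 - 2 * t / H + t\<^sup>2 * N\<^sup>2"
  have "0 < N\<^sup>2 + 1" by (simp add: add_nonneg_pos)
  then have "t > 0" using \<open>H > 0\<close> by (simp add: t_def)
  have "N\<^sup>2 / (N\<^sup>2 + 1) < 2" using \<open>0 < N\<^sup>2 + 1\<close> by (simp add: divide_less_eq)
  then have "N\<^sup>2 / (N\<^sup>2 + 1) / H < 2 / H" using \<open>H > 0\<close> by (rule divide_strict_right_mono)
  moreover have "t * N\<^sup>2 = N\<^sup>2 / (N\<^sup>2 + 1) / H" by (simp add: t_def mult.commute)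
  ultimately have "t * N\<^sup>2 < 2 / H" by simp
  then have "t * (t * N\<^sup>2) < t * (2 / H)" using \<open>t > 0\<close> by (rule mult_strict_left_mono)
  then have "t\<^sup>2 * N\<^sup>2 < 2 * t / H" by (simp add: power2_eq_square mult_ac)
  then have "q < 1" by (simp add: q_def)
  have "norm (d - t *\<^sub>R A d) \<le> sqrt (max q 0) * norm d" for d
  proof -
    have "(norm (d - t *\<^sub>R A d))\<^sup>2 = (norm d)\<^sup>2 - 2 * t * (d \<bullet> A d) + t\<^sup>2 * (norm (A d))\<^sup>2"
      unfolding power2_norm_eq_inner
      by (simp add: inner_diff_left inner_diff_right algebra_simps inner_commute power2_eq_square)
    also have "\<dots> \<le> (norm d)\<^sup>2 - 2 * t * ((norm d)\<^sup>2 / H) + t\<^sup>2 * (N * norm d)\<^sup>2"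
    proof -
      have "(norm d)\<^sup>2 / H \<le> d \<bullet> A d" using coercive[of d] \<open>H > 0\<close> by (simp add: field_simps)
      moreover have "(norm (A d))\<^sup>2 \<le> (N * norm d)\<^sup>2"
        unfolding N_def by (intro power_mono norm_blinfun) simp
      ultimately show ?thesis using \<open>t > 0\<close> by (intro add_mono diff_mono mult_left_mono) auto
    qed
    also have "\<dots> = q * (norm d)\<^sup>2" by (simp add: q_def field_simps power2_eq_square)
    also have "\<dots> \<le> max q 0 * (norm d)\<^sup>2" by (intro mult_right_mono) auto
    finally have "sqrt ((norm (d - t *\<^sub>R A d))\<^sup>2) \<le> sqrt (max q 0 * (norm d)\<^sup>2)"
      by (rule real_sqrt_le_mono)
    then show ?thesis by (simp add: real_sqrt_mult)
  qed
  moreover have "0 \<le> sqrt (max q 0)" and "sqrt (max q 0) < 1" using \<open>q < 1\<close> by auto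
  ultimately show thesis using that[OF \<open>t > 0\<close>] by blast
qed

lemma coercive_surj:
  fixes A :: "'a::{real_inner,complete_space} \<Rightarrow>\<^sub>L 'a"
  assumes "\<And>x. (norm x)\<^sup>2 \<le> H * (x \<bullet> A x)" and "H > 0"
  shows "surj A"
proof -
  obtain t c where "t > 0" "0 \<le> c" "c < 1" and contraction: "\<And>d. norm (d - t *\<^sub>R A d) \<le> c * norm d"
    using coercive_contraction[OF assms] by blast
  have "\<exists>x. A x = b" for b
  proof -
    define f where "f x = x - t *\<^sub>R (A x - b)" for x
    have "dist (f x) (f x') \<le> c * dist x x'" for x x'
      using contraction[of "x - x'"]
      by (simp add: f_def dist_norm blinfun.diff_right algebra_simps)
    then obtain x where "f x = x" using banach_fix_type[OF \<open>0 \<le> c\<close> \<open>c < 1\<close>] by blast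
    then show ?thesis using \<open>t > 0\<close> by (auto simp: f_def)
  qed
  then show ?thesis by (metis surjI)
qed

lemma blinfun_inv_bounded_below:
  fixes A :: "'a::real_normed_vector \<Rightarrow>\<^sub>L 'a"
  assumes "surj A" and below: "\<And>x. norm x \<le> H * norm (A x)" and "0 \<le> H"
  shows "A o\<^sub>L blinfun_inv A = id_blinfun" and "blinfun_inv A o\<^sub>L A = id_blinfun"
    and "norm (blinfun_inv A) \<le> H"
proof -
  define g where "g = inv A"
  have A_g: "A (g b) = b" for b using \<open>surj A\<close> by (simp add: g_def surj_f_inv_f)
  have "inj A"
  proof (rule injI)
    fix x x' assume "A x = A x'"
    then show "x = x'" using below[of "x - x'"] by (simp add: blinfun.diff_right)
  qed
  then have g_A: "g (A x) = x" for x by (simp add: g_def)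
  have "bounded_linear g"
  proof
    show "g (a + b) = g a + g b" for a b by (metis A_g blinfun.add_right g_A)
    show "g (r *\<^sub>R a) = r *\<^sub>R g a" for r a by (metis A_g blinfun.scaleR_right g_A)
    show "\<exists>K. \<forall>a. norm (g a) \<le> norm a * K"
      using below A_g by (metis mult.commute)
  qed
  then have "\<exists>C. A o\<^sub>L C = id_blinfun \<and> C o\<^sub>L A = id_blinfun"
    by (intro exI[of _ "Blinfun g"])
      (auto intro!: blinfun_eqI simp: bounded_linear_Blinfun_apply A_g g_A)
  then have inverse: "A o\<^sub>L blinfun_inv A = id_blinfun \<and> blinfun_inv A o\<^sub>L A = id_blinfun"
    unfolding blinfun_inv_def by (rule someI_ex)
  then show "A o\<^sub>L blinfun_inv A = id_blinfun" and "blinfun_inv A o\<^sub>L A = id_blinfun" by auto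
  show "norm (blinfun_inv A) \<le> H"
  proof (rule norm_blinfun_bound[OF \<open>0 \<le> H\<close>])
    fix x
    have "A (blinfun_inv A x) = x"
      using inverse by (metis blinfun_apply_blinfun_compose blinfun_apply_id_blinfun)
    then show "norm (blinfun_inv A x) \<le> H * norm x" using below[of "blinfun_inv A x"] by simp
  qed
qed

lemma coercive_blinfun_inv:
  fixes A :: "'a::{real_inner,complete_space} \<Rightarrow>\<^sub>L 'a"
  assumes "\<And>x. (norm x)\<^sup>2 \<le> H * (x \<bullet> A x)" and "H > 0"
  shows "A o\<^sub>L blinfun_inv A = id_blinfun" and "norm (blinfun_inv A) \<le> H"
proof -
  have below: "norm x \<le> H * norm (A x)" for x
    using coercive_norm_le[OF assms(1)] assms(2) by simp
  show "A o\<^sub>L blinfun_inv A = id_blinfun" and "norm (blinfun_inv A) \<le> H"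
    using blinfun_inv_bounded_below[OF coercive_surj[OF assms] below] assms(2) by simp_all
qed

lemma coercive_by_right_inverse:
  assumes "selfadjoint A" and nonneg: "\<And>x. 0 \<le> x \<bullet> A x" and "A o\<^sub>L C = id_blinfun"
  shows "(norm x)\<^sup>2 \<le> norm C * (x \<bullet> A x)"
proof (cases "x = 0")
  case False
  define w where "w = C x"
  have "A w = x" using \<open>A o\<^sub>L C = id_blinfun\<close> unfolding w_def
    by (metis blinfun_apply_blinfun_compose blinfun_apply_id_blinfun)
  then have wAx: "w \<bullet> A x = (norm x)\<^sup>2" and wAw: "w \<bullet> A w = w \<bullet> x"
    using \<open>selfadjoint A\<close> by (auto simp: selfadjoint_def power2_norm_eq_inner)
  have "w \<bullet> x \<le> norm C * norm x * norm x"
    unfolding w_def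
    by (rule order_trans[OF norm_cauchy_schwarz mult_right_mono[OF norm_blinfun norm_ge_zero]])
  then have wx: "w \<bullet> x \<le> norm C * (norm x)\<^sup>2" by (simp add: power2_eq_square mult.assoc)
  have "(norm x)\<^sup>2 * (norm x)\<^sup>2 = (w \<bullet> A x)\<^sup>2" by (simp add: wAx power2_eq_square)
  also have "\<dots> \<le> (w \<bullet> A w) * (x \<bullet> A x)"
    by (rule selfadjoint_nonneg_Cauchy_Schwarz[OF assms(1) nonneg])
  also have "\<dots> \<le> (norm C * (norm x)\<^sup>2) * (x \<bullet> A x)"
    unfolding wAw using wx nonneg by (rule mult_right_mono)
  finally have "(norm x)\<^sup>2 * (norm x)\<^sup>2 \<le> (norm C * (x \<bullet> A x)) * (norm x)\<^sup>2"
    by (simp only: mult_ac)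
  then show ?thesis by (rule mult_right_le_imp_le) (use False in simp)
qed simp

lemma Lplus_iff_coercive:
  "A \<in> Lplus \<longleftrightarrow> selfadjoint A \<and> (\<exists>H>0. \<forall>x. (norm x)\<^sup>2 \<le> H * (x \<bullet> A x))"
proof -
  have "(\<exists>c>0. \<forall>x. c * (norm x)\<^sup>2 \<le> x \<bullet> A x) \<longleftrightarrow> (\<exists>H>0. \<forall>x. (norm x)\<^sup>2 \<le> H * (x \<bullet> A x))"
  proof
    assume "\<exists>c>0. \<forall>x. c * (norm x)\<^sup>2 \<le> x \<bullet> A x"
    then obtain c where "c > 0" "\<And>x. c * (norm x)\<^sup>2 \<le> x \<bullet> A x" by blast
    then show "\<exists>H>0. \<forall>x. (norm x)\<^sup>2 \<le> H * (x \<bullet> A x)"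
      by (intro exI[of _ "1 / c"]) (auto simp: field_simps)
  next
    assume "\<exists>H>0. \<forall>x. (norm x)\<^sup>2 \<le> H * (x \<bullet> A x)"
    then obtain H where "H > 0" "\<And>x. (norm x)\<^sup>2 \<le> H * (x \<bullet> A x)" by blast
    then show "\<exists>c>0. \<forall>x. c * (norm x)\<^sup>2 \<le> x \<bullet> A x"
      by (intro exI[of _ "1 / H"]) (auto simp: field_simps)
  qed
  then show ?thesis by (simp add: Lplus_def selfadjoint_def)
qed

lemma Lplus_coercive_inv:
  fixes A :: "'a::{real_inner,complete_space} \<Rightarrow>\<^sub>L 'a"
  assumes "A \<in> Lplus"
  shows "(norm x)\<^sup>2 \<le> norm (blinfun_inv A) * (x \<bullet> A x)"
proof -
  obtain H where "selfadjoint A" "H > 0" and coercive: "\<And>x. (norm x)\<^sup>2 \<le> H * (x \<bullet> A x)"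
    using assms Lplus_iff_coercive by blast
  show ?thesis
    by (rule coercive_by_right_inverse[OF \<open>selfadjoint A\<close> coercive_nonneg[OF coercive \<open>H > 0\<close>]
          coercive_blinfun_inv(1)[OF coercive \<open>H > 0\<close>]])
qed

lemma norm_le_inner_residual:
  fixes x s y :: "'a::real_inner"
  assumes "0 < y \<bullet> s"
  shows "norm x \<le> \<bar>y \<bullet> x\<bar> / (y \<bullet> s) * norm s
    + (1 + norm y * norm s / (y \<bullet> s)) * norm (x - \<alpha> *\<^sub>R s)"
proof -
  define z where "z = x - \<alpha> *\<^sub>R s"
  have "y \<bullet> x = \<alpha> * (y \<bullet> s) + y \<bullet> z" by (simp add: z_def inner_diff_right)
  then have "\<alpha> = (y \<bullet> x) / (y \<bullet> s) - (y \<bullet> z) / (y \<bullet> s)"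
    using assms by (simp add: field_simps)
  then have "\<bar>\<alpha>\<bar> \<le> \<bar>y \<bullet> x\<bar> / (y \<bullet> s) + \<bar>y \<bullet> z\<bar> / (y \<bullet> s)"
    using assms abs_triangle_ineq4 by (metis abs_divide abs_of_pos)
  also have "\<dots> \<le> \<bar>y \<bullet> x\<bar> / (y \<bullet> s) + norm y * norm z / (y \<bullet> s)"
    using assms Cauchy_Schwarz_ineq2[of y z] by (simp add: divide_right_mono)
  finally have alpha: "\<bar>\<alpha>\<bar> \<le> \<bar>y \<bullet> x\<bar> / (y \<bullet> s) + norm y * norm z / (y \<bullet> s)" .
  have "norm x \<le> norm z + \<bar>\<alpha>\<bar> * norm s"
    using norm_triangle_ineq[of z "\<alpha> *\<^sub>R s"] by (simp add: z_def)
  also have "\<dots> \<le> norm z + (\<bar>y \<bullet> x\<bar> / (y \<bullet> s) + norm y * norm z / (y \<bullet> s)) * norm s"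
    using alpha by (intro add_left_mono mult_right_mono) auto
  finally show ?thesis by (simp add: z_def algebra_simps)
qed

lemma power2_add_le_weighted:
  fixes a b P Q :: real
  assumes "P > 0" and "Q > 0"
  shows "(a + b)\<^sup>2 \<le> (P + Q) * (a\<^sup>2 / P + b\<^sup>2 / Q)"
proof -
  have "(P + Q) * (a\<^sup>2 / P + b\<^sup>2 / Q) - (a + b)\<^sup>2 = (Q * a - P * b)\<^sup>2 / (P * Q)"
    using assms by (simp add: field_simps power2_eq_square)
  also have "\<dots> \<ge> 0" using assms by simp
  finally show ?thesis by simp
qed

lemma power_max:
  fixes a b :: "'a::linordered_semidom"
  assumes "0 \<le> a" and "0 \<le> b"
  shows "max a b ^ n = max (a ^ n) (b ^ n)"
  using assms by (metis max.absorb1 max.absorb2 nle_le power_mono)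

lemma rank1_apply [simp]: "rank1 u v w = (v \<bullet> w) *\<^sub>R u"
  unfolding rank1_def
  by (subst bounded_linear_Blinfun_apply) (auto intro!: bounded_linear_intros)

definition bfgs_update :: "('a::real_inner \<Rightarrow>\<^sub>L 'a) \<Rightarrow> 'a \<Rightarrow> 'a \<Rightarrow> ('a \<Rightarrow>\<^sub>L 'a)" where
  "bfgs_update B s y =
     B + (1 / (y \<bullet> s)) *\<^sub>R rank1 y y - (1 / (s \<bullet> B s)) *\<^sub>R (rank1 (B s) s o\<^sub>L B)"

lemma bfgs_seq_Suc_update:
  "bfgs_seq B0 s y (Suc j) = bfgs_update (bfgs_seq B0 s y j) (s (Suc j)) (y (Suc j))"
  by (simp add: bfgs_update_def Let_def)

lemma bfgs_update_apply:
  "bfgs_update B s y x = B x + ((y \<bullet> x) / (y \<bullet> s)) *\<^sub>R y - ((s \<bullet> B x) / (s \<bullet> B s)) *\<^sub>R B s"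
  by (simp add: bfgs_update_def blinfun.bilinear_simps)

lemma selfadjoint_bfgs_update:
  assumes "selfadjoint B"
  shows "selfadjoint (bfgs_update B s y)"
  using assms unfolding selfadjoint_def bfgs_update_apply
  by (simp add: inner_add_left inner_diff_left inner_add_right inner_diff_right inner_commute
      mult_ac)

lemma inner_bfgs_update:
  assumes "selfadjoint B"
  shows "x \<bullet> bfgs_update B s y x
    = x \<bullet> B x + (y \<bullet> x)\<^sup>2 / (y \<bullet> s) - (s \<bullet> B x)\<^sup>2 / (s \<bullet> B s)"
  using assms unfolding selfadjoint_def bfgs_update_apply
  by (simp add: inner_add_right inner_diff_right inner_commute power2_eq_square)

lemma curvature_condition:
  fixes \<kappa> :: real
  assumes "\<kappa> > 0" and "1 / \<kappa> \<le> (y \<bullet> s) / (norm v)\<^sup>2"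
  shows "0 < y \<bullet> s" and "(norm v)\<^sup>2 \<le> \<kappa> * (y \<bullet> s)"
proof -
  have "0 < 1 / \<kappa>" using assms(1) by simp
  then have "0 < (y \<bullet> s) / (norm v)\<^sup>2" using assms(2) by linarith
  then show "0 < y \<bullet> s" by (simp add: zero_less_divide_iff)
  with \<open>0 < (y \<bullet> s) / (norm v)\<^sup>2\<close> show "(norm v)\<^sup>2 \<le> \<kappa> * (y \<bullet> s)"
    using assms by (auto simp: field_simps zero_less_divide_iff)
qed

lemma inner_bfgs_update_nonneg:
  assumes "selfadjoint B" and nonneg: "\<And>x. 0 \<le> x \<bullet> B x" and "0 < y \<bullet> s"
  shows "0 \<le> x \<bullet> bfgs_update B s y x"
proof -
  have "(s \<bullet> B x)\<^sup>2 / (s \<bullet> B s) \<le> x \<bullet> B x"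
    using selfadjoint_nonneg_Cauchy_Schwarz[OF assms(1) nonneg, of s x] nonneg[of s] nonneg[of x]
    by (cases "s \<bullet> B s = 0") (auto simp: divide_le_eq mult.commute)
  moreover have "0 \<le> (y \<bullet> x)\<^sup>2 / (y \<bullet> s)" using \<open>0 < y \<bullet> s\<close> by simp
  ultimately show ?thesis by (simp add: inner_bfgs_update[OF assms(1)])
qed

lemma inner_bfgs_update_le:
  assumes "selfadjoint B" and nonneg: "\<And>x. 0 \<le> x \<bullet> B x"
    and "0 < y \<bullet> s" and "(norm y)\<^sup>2 \<le> \<kappa>2 * (y \<bullet> s)"
  shows "x \<bullet> bfgs_update B s y x \<le> x \<bullet> B x + \<kappa>2 * (norm x)\<^sup>2"
proof -
  have "(y \<bullet> x)\<^sup>2 / (y \<bullet> s) \<le> (norm y)\<^sup>2 * (norm x)\<^sup>2 / (y \<bullet> s)"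
    using Cauchy_Schwarz_ineq[of y x] \<open>0 < y \<bullet> s\<close>
    by (simp add: divide_right_mono power2_norm_eq_inner)
  also have "\<dots> \<le> \<kappa>2 * (norm x)\<^sup>2"
    using mult_right_mono[OF assms(4) zero_le_power2[of "norm x"]] \<open>0 < y \<bullet> s\<close>
    by (simp add: pos_divide_le_eq mult_ac)
  finally have "(y \<bullet> x)\<^sup>2 / (y \<bullet> s) \<le> \<kappa>2 * (norm x)\<^sup>2" .
  moreover have "0 \<le> (s \<bullet> B x)\<^sup>2 / (s \<bullet> B s)" using nonneg[of s] by simp
  ultimately show ?thesis by (simp add: inner_bfgs_update[OF assms(1)])
qed

lemma inner_bfgs_update_residual:
  fixes B :: "'a::real_inner \<Rightarrow>\<^sub>L 'a" and s y x :: 'a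
  assumes "selfadjoint B" and "s \<bullet> B s \<noteq> 0"
  defines "z \<equiv> x - ((s \<bullet> B x) / (s \<bullet> B s)) *\<^sub>R s"
  shows "x \<bullet> bfgs_update B s y x = z \<bullet> B z + (y \<bullet> x)\<^sup>2 / (y \<bullet> s)"
proof -
  have "x \<bullet> B s = s \<bullet> B x" using \<open>selfadjoint B\<close> by (simp add: selfadjoint_def inner_commute)
  then have "z \<bullet> B z = x \<bullet> B x - (s \<bullet> B x)\<^sup>2 / (s \<bullet> B s)"
    using assms(2) unfolding z_def
    by (simp add: blinfun.bilinear_simps inner_diff_left inner_diff_right power2_eq_square
        field_simps)
  then show ?thesis by (simp add: inner_bfgs_update[OF assms(1)])
qed

lemma bfgs_update_coercive:
  assumes "selfadjoint B" and coercive: "\<And>x. (norm x)\<^sup>2 \<le> h * (x \<bullet> B x)" and "h > 0"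
    and "0 < y \<bullet> s" and s_bound: "(norm s)\<^sup>2 \<le> \<kappa>1 * (y \<bullet> s)"
    and y_bound: "(norm y)\<^sup>2 \<le> \<kappa>2 * (y \<bullet> s)"
  shows "(norm x)\<^sup>2 \<le> (\<kappa>1 + (2 + 2 * \<kappa>1 * \<kappa>2) * h) * (x \<bullet> bfgs_update B s y x)"
proof -
  define r where "r = y \<bullet> s"
  define z where "z = x - ((s \<bullet> B x) / (s \<bullet> B s)) *\<^sub>R s"
  define P where "P = (norm s)\<^sup>2 / r"
  define q where "q = norm y * norm s / r"
  define Q where "Q = (1 + q)\<^sup>2 * h"
  have "r > 0" using \<open>0 < y \<bullet> s\<close> by (simp add: r_def)
  then have "s \<noteq> 0" by (auto simp: r_def)
  then have "0 < (norm s)\<^sup>2" by simp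
  then have "0 < h * (s \<bullet> B s)" using coercive[of s] by linarith
  then have "s \<bullet> B s \<noteq> 0" by auto
  have update: "x \<bullet> bfgs_update B s y x = z \<bullet> B z + (y \<bullet> x)\<^sup>2 / r"
    unfolding z_def r_def by (rule inner_bfgs_update_residual[OF assms(1) \<open>s \<bullet> B s \<noteq> 0\<close>])
  have "(norm z)\<^sup>2 / h \<le> z \<bullet> B z" using coercive[of z] \<open>h > 0\<close> by (simp add: field_simps)
  have "0 \<le> x \<bullet> bfgs_update B s y x"
    by (rule inner_bfgs_update_nonneg[OF assms(1) coercive_nonneg[OF coercive \<open>h > 0\<close>] \<open>0 < y \<bullet> s\<close>])
  have "P > 0" and "P \<le> \<kappa>1"
    using \<open>r > 0\<close> \<open>s \<noteq> 0\<close> s_bound by (simp_all add: P_def r_def pos_divide_le_eq)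
  have "q \<ge> 0" using \<open>r > 0\<close> by (simp add: q_def)
  then have "Q > 0" using \<open>h > 0\<close> by (simp add: Q_def)
  have "q\<^sup>2 = ((norm s)\<^sup>2 / r) * ((norm y)\<^sup>2 / r)" by (simp add: q_def power2_eq_square)
  also have "\<dots> \<le> \<kappa>1 * \<kappa>2"
  proof (rule mult_mono)
    show "0 \<le> \<kappa>1"
      using order_trans[OF zero_le_power2 s_bound] \<open>r > 0\<close> by (simp add: r_def zero_le_mult_iff)
  qed (use \<open>r > 0\<close> s_bound y_bound in \<open>auto simp: r_def pos_divide_le_eq\<close>)
  finally have "(1 + q)\<^sup>2 \<le> 2 + 2 * \<kappa>1 * \<kappa>2"
    using zero_le_power2[of "1 - q"] by (simp add: power2_eq_square algebra_simps)
  then have "P + Q \<le> \<kappa>1 + (2 + 2 * \<kappa>1 * \<kappa>2) * h"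
    using \<open>P \<le> \<kappa>1\<close> \<open>h > 0\<close> by (simp add: Q_def add_mono mult_right_mono)
  have first: "(\<bar>y \<bullet> x\<bar> / r * norm s)\<^sup>2 / P = (y \<bullet> x)\<^sup>2 / r"
    using \<open>r > 0\<close> \<open>s \<noteq> 0\<close>
    by (simp add: P_def power_mult_distrib power_divide field_simps power2_eq_square)
  have second: "((1 + q) * norm z)\<^sup>2 / Q = (norm z)\<^sup>2 / h"
    using \<open>q \<ge> 0\<close> by (simp add: Q_def power_mult_distrib add_nonneg_eq_0_iff)
  have "(norm x)\<^sup>2 \<le> (\<bar>y \<bullet> x\<bar> / r * norm s + (1 + q) * norm z)\<^sup>2"
    using norm_le_inner_residual[OF \<open>0 < y \<bullet> s\<close>, of x] unfolding q_def r_def z_def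
    by (intro power_mono) auto
  also have "\<dots> \<le> (P + Q) * ((y \<bullet> x)\<^sup>2 / r + (norm z)\<^sup>2 / h)"
    using power2_add_le_weighted[OF \<open>P > 0\<close> \<open>Q > 0\<close>, of "\<bar>y \<bullet> x\<bar> / r * norm s" "(1 + q) * norm z"]
    unfolding first second .
  also have "\<dots> \<le> (P + Q) * (x \<bullet> bfgs_update B s y x)"
    unfolding update using \<open>(norm z)\<^sup>2 / h \<le> z \<bullet> B z\<close> \<open>P > 0\<close> \<open>Q > 0\<close>
    by (intro mult_left_mono) auto
  also have "\<dots> \<le> (\<kappa>1 + (2 + 2 * \<kappa>1 * \<kappa>2) * h) * (x \<bullet> bfgs_update B s y x)"
    by (rule mult_right_mono) fact+
  finally show ?thesis .
qed

lemma selfadjoint_bfgs_seq: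
  assumes "selfadjoint B0"
  shows "selfadjoint (bfgs_seq B0 s y n)"
  by (induction n)
    (simp_all only: bfgs_seq_Suc_update bfgs_seq.simps(1) assms selfadjoint_bfgs_update)

lemma inner_bfgs_seq_nonneg:
  assumes "selfadjoint B0" and "\<And>x. 0 \<le> x \<bullet> B0 x"
    and "\<And>j. j \<in> {1..n} \<Longrightarrow> 0 < y j \<bullet> s j"
  shows "0 \<le> x \<bullet> bfgs_seq B0 s y n x"
  using assms(3)
proof (induction n arbitrary: x)
  case 0
  then show ?case using assms(2) by simp
next
  case (Suc n)
  then show ?case unfolding bfgs_seq_Suc_update
    by (intro inner_bfgs_update_nonneg selfadjoint_bfgs_seq assms(1)) auto
qed

lemma inner_bfgs_seq_le:
  assumes "selfadjoint B0" and "\<And>x. 0 \<le> x \<bullet> B0 x"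
    and "\<And>j. j \<in> {1..n} \<Longrightarrow> 0 < y j \<bullet> s j"
    and "\<And>j. j \<in> {1..n} \<Longrightarrow> (norm (y j))\<^sup>2 \<le> \<kappa>2 * (y j \<bullet> s j)"
  shows "x \<bullet> bfgs_seq B0 s y n x \<le> x \<bullet> B0 x + real n * \<kappa>2 * (norm x)\<^sup>2"
  using assms(3,4)
proof (induction n arbitrary: x)
  case (Suc n)
  have "x \<bullet> bfgs_seq B0 s y (Suc n) x \<le> x \<bullet> bfgs_seq B0 s y n x + \<kappa>2 * (norm x)\<^sup>2"
    unfolding bfgs_seq_Suc_update using Suc.prems
    by (intro inner_bfgs_update_le selfadjoint_bfgs_seq inner_bfgs_seq_nonneg assms(1,2)) auto
  also have "\<dots> \<le> x \<bullet> B0 x + real (Suc n) * \<kappa>2 * (norm x)\<^sup>2"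
    using Suc by (simp add: algebra_simps)
  finally show ?case .
qed simp

lemma norm_bfgs_seq_le:
  assumes "selfadjoint B0" and "\<And>x. 0 \<le> x \<bullet> B0 x"
    and "\<And>j. j \<in> {1..n} \<Longrightarrow> 0 < y j \<bullet> s j"
    and "\<And>j. j \<in> {1..n} \<Longrightarrow> (norm (y j))\<^sup>2 \<le> \<kappa>2 * (y j \<bullet> s j)" and "0 \<le> \<kappa>2"
  shows "norm (bfgs_seq B0 s y n) \<le> norm B0 + real n * \<kappa>2"
proof (rule norm_blinfun_le_quadratic_bound)
  fix x
  have "x \<bullet> bfgs_seq B0 s y n x \<le> x \<bullet> B0 x + real n * \<kappa>2 * (norm x)\<^sup>2"
    by (rule inner_bfgs_seq_le) (use assms in auto)
  then show "x \<bullet> bfgs_seq B0 s y n x \<le> (norm B0 + real n * \<kappa>2) * (norm x)\<^sup>2"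
    using inner_blinfun_le_norm[of x B0] by (simp add: algebra_simps)
qed (use assms in \<open>auto intro: selfadjoint_bfgs_seq inner_bfgs_seq_nonneg\<close>)

lemma bfgs_seq_coercive:
  assumes "selfadjoint B0" and coercive: "\<And>x. (norm x)\<^sup>2 \<le> H * (x \<bullet> B0 x)" and "1 \<le> H"
    and "1 \<le> m" and "\<kappa>1 \<le> m" and "\<kappa>1 * \<kappa>2 \<le> m"
    and "\<And>j. j \<in> {1..n} \<Longrightarrow> 0 < y j \<bullet> s j"
    and "\<And>j. j \<in> {1..n} \<Longrightarrow> (norm (s j))\<^sup>2 \<le> \<kappa>1 * (y j \<bullet> s j)"
    and "\<And>j. j \<in> {1..n} \<Longrightarrow> (norm (y j))\<^sup>2 \<le> \<kappa>2 * (y j \<bullet> s j)"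
  shows "(norm x)\<^sup>2 \<le> (5 * m) ^ n * H * (x \<bullet> bfgs_seq B0 s y n x)"
  using assms(7-9)
proof (induction n arbitrary: x)
  case 0
  then show ?case using coercive by simp
next
  case (Suc n)
  define h where "h = (5 * m) ^ n * H"
  have "1 \<le> (5 * m) ^ n" using \<open>1 \<le> m\<close> by (intro one_le_power) simp
  then have "1 \<le> h" unfolding h_def using mult_mono[OF _ \<open>1 \<le> H\<close>] by simp
  have "0 \<le> x \<bullet> bfgs_seq B0 s y (Suc n) x"
    using Suc.prems(1) \<open>1 \<le> H\<close>
    by (intro inner_bfgs_seq_nonneg assms(1) coercive_nonneg[OF coercive]) auto
  have "(norm x)\<^sup>2 \<le> (\<kappa>1 + (2 + 2 * \<kappa>1 * \<kappa>2) * h) * (x \<bullet> bfgs_seq B0 s y (Suc n) x)"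
    unfolding bfgs_seq_Suc_update using Suc \<open>1 \<le> h\<close>
    by (intro bfgs_update_coercive selfadjoint_bfgs_seq assms(1)) (auto simp: h_def)
  also have "\<dots> \<le> (5 * m * h) * (x \<bullet> bfgs_seq B0 s y (Suc n) x)"
  proof (rule mult_right_mono)
    have "m \<le> m * h" using \<open>1 \<le> m\<close> \<open>1 \<le> h\<close> by simp
    then have "\<kappa>1 \<le> m * h" using \<open>\<kappa>1 \<le> m\<close> by linarith
    moreover have "h \<le> m * h" using \<open>1 \<le> m\<close> \<open>1 \<le> h\<close> by simp
    moreover have "\<kappa>1 * \<kappa>2 * h \<le> m * h" using \<open>\<kappa>1 * \<kappa>2 \<le> m\<close> \<open>1 \<le> h\<close> by simp
    ultimately show "\<kappa>1 + (2 + 2 * \<kappa>1 * \<kappa>2) * h \<le> 5 * m * h" by (simp add: algebra_simps)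
  qed fact
  finally show ?case by (simp add: h_def mult_ac)
qed

theorem lemma4p1:
  fixes B0 :: "'a::{real_inner,complete_space} \<Rightarrow>\<^sub>L 'a"
    and s y :: "nat \<Rightarrow> 'a" and M :: nat and \<kappa>1 \<kappa>2 :: real
  assumes "\<kappa>1 > 0" and "\<kappa>2 > 0"
    and "\<And>j. j \<in> {1..M} \<Longrightarrow> (y j \<bullet> s j) / (norm (s j))\<^sup>2 \<ge> 1 / \<kappa>1"
    and "\<And>j. j \<in> {1..M} \<Longrightarrow> (y j \<bullet> s j) / (norm (y j))\<^sup>2 \<ge> 1 / \<kappa>2"
    and "B0 \<in> Lplus"
  shows "bfgs_seq B0 s y M \<in> Lplus
    \<and> norm (bfgs_seq B0 s y M) \<le> norm B0 + real M * \<kappa>2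
    \<and> norm (blinfun_inv (bfgs_seq B0 s y M))
        \<le> 5 ^ M * max 1 (norm (blinfun_inv B0)) * max 1 (max (\<kappa>1 ^ M) ((\<kappa>1 * \<kappa>2) ^ M))"
proof -
  let ?B = "bfgs_seq B0 s y M"
  define H0 where "H0 = max 1 (norm (blinfun_inv B0))"
  define m where "m = max 1 (max \<kappa>1 (\<kappa>1 * \<kappa>2))"
  have curvature: "0 < y j \<bullet> s j" "(norm (s j))\<^sup>2 \<le> \<kappa>1 * (y j \<bullet> s j)"
      "(norm (y j))\<^sup>2 \<le> \<kappa>2 * (y j \<bullet> s j)" if "j \<in> {1..M}" for j
    using curvature_condition[OF assms(1) assms(3)[OF that]]
      curvature_condition[OF assms(2) assms(4)[OF that]] by auto
  obtain H where "selfadjoint B0" "H > 0" and coercive0: "\<And>x. (norm x)\<^sup>2 \<le> H * (x \<bullet> B0 x)"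
    using assms(5) Lplus_iff_coercive by blast
  note nonneg = coercive_nonneg[OF coercive0 \<open>H > 0\<close>]
  have "(norm x)\<^sup>2 \<le> H0 * (x \<bullet> B0 x)" for x
    using Lplus_coercive_inv[OF assms(5)] mult_right_mono[OF max.cobounded2 nonneg]
    unfolding H0_def by (blast intro: order_trans)
  then have coercive: "(norm x)\<^sup>2 \<le> (5 * m) ^ M * H0 * (x \<bullet> ?B x)" for x
    by (rule bfgs_seq_coercive[OF \<open>selfadjoint B0\<close> _ _ _ _ _ curvature]) (auto simp: H0_def m_def)
  have "0 < (5 * m) ^ M * H0" by (simp add: m_def H0_def)
  have "?B \<in> Lplus"
    unfolding Lplus_iff_coercive
    using selfadjoint_bfgs_seq[OF \<open>selfadjoint B0\<close>] coercive \<open>0 < (5 * m) ^ M * H0\<close> by blast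
  moreover have "norm ?B \<le> norm B0 + real M * \<kappa>2"
    using \<open>\<kappa>2 > 0\<close> by (intro norm_bfgs_seq_le \<open>selfadjoint B0\<close> nonneg curvature) auto
  moreover have "norm (blinfun_inv ?B) \<le> (5 * m) ^ M * H0"
    by (rule coercive_blinfun_inv(2)[OF coercive \<open>0 < (5 * m) ^ M * H0\<close>])
  moreover have "m ^ M = max 1 (max (\<kappa>1 ^ M) ((\<kappa>1 * \<kappa>2) ^ M))"
    using assms(1,2) by (simp add: m_def power_max)
  ultimately show ?thesis by (simp add: H0_def power_mult_distrib mult_ac)
qed

end
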